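(* Fix an architecture $(\mathbf d,\mathbf k,\mathbf s)$ of depth $N$ and let $k_v=k_1+\sum_{i=2}^N(k_i-1)\prod_{m=1}^{i-1}s_m$. For every $T>0$ and all real numbers $\delta_1,\dots,\delta_{N-1}$ there exists a constant $\tau=\tau(T,k_v,\delta_1,\dots,\delta_{N-1})$ such that the following holds: whenever $\vec w=(w^{(1)},\dots,w^{(N)})$ with $w^{(i)}\in\mathbb{R}^{k_i}$ satisfies $\|\pi(\vec w)\|_1\le T$ and $\|w^{(i+1)}\|_2^2-\|w^{(i)}\|_2^2=\delta_i$ for $i=1,\dots,N-1$, then \[ \|w^{(i)}\|_2^2\le\tau\qquad\text{for all } i\in\{1,\dots,N\}. \]
   Context: An architecture of depth $N$ is a triple $(\mathbf d,\mathbf k,\mathbf s)=((d_0,\dots,d_N),(k_1,\dots,k_N),(s_1,\dots,s_N))$ of positive integers with $d_i=\frac{d_{i-1}-k_i}{s_i}+1$ for $i=1,\dots,N$. For a filter $w\in\mathbb{R}^{k}$ and stride $s$, the convolutional matrix $\Pi_{(d',d''),k,s}(w)\in\mathbb{R}^{d''\times d'}$ has entries $W_{j,(j-1)s+n}=w_n$ for $j\in\{1,\dots,d''\}$, $n\in\{1,\dots,k\}$, and zeros elsewhere. For $\vec w=(w^{(1)},\dots,w^{(N)})$, $\Pi(\vec w):=W_N\cdots W_1$ with $W_i=\Pi_{(d_{i-1},d_i),k_i,s_i}(w^{(i)})$; this is a convolutional matrix with stride $\prod_i s_i$ and filter width $k_v$, and its filter $v=\pi(\vec w)\in\mathbb{R}^{k_v}$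 is the final filter. Equivalently, $\sum_{j=0}^{k_v-1}v_{j+1}x^j=\prod_{i=1}^N\sum_{j=0}^{k_i-1}w^{(i)}_{j+1}x^{j\prod_{n=1}^{i-1}s_n}$. $\|\cdot\|_1$ and $\|\cdot\|_2$ are the usual vector norms. *)

theory Defs
  imports Main "HOL.Real"
begin

definition is_architecture :: "nat \<Rightarrow> (nat \<Rightarrow> nat) \<Rightarrow> (nat \<Rightarrow> nat) \<Rightarrow> (nat \<Rightarrow> nat) \<Rightarrow> bool" where
  "is_architecture N d k s \<longleftrightarrow>
     (\<forall>i\<le>N. 0 < d i) \<and>
     (\<forall>i\<in>{1..N}. 0 < k i \<and> 0 < s i \<and>
        real (d i) = (real (d (i - 1)) - real (k i)) / real (s i) + 1)"

text \<open>Matrices are represented as functions of (row, column), 1-indexed.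
  The filter w is 1-indexed: w 1, ..., w k.\<close>
definition conv_mat :: "nat \<Rightarrow> nat \<Rightarrow> nat \<Rightarrow> nat \<Rightarrow> (nat \<Rightarrow> real) \<Rightarrow> nat \<Rightarrow> nat \<Rightarrow> real" where
  "conv_mat d' d'' k s w j c =
     (if 1 \<le> j \<and> j \<le> d'' \<and> 1 \<le> c \<and> c \<le> d' \<and> (j - 1) * s < c \<and> c \<le> (j - 1) * s + k
      then w (c - (j - 1) * s) else 0)"

definition mat_mul :: "(nat \<Rightarrow> nat \<Rightarrow> real) \<Rightarrow> (nat \<Rightarrow> nat \<Rightarrow> real) \<Rightarrow> nat \<Rightarrow> nat \<Rightarrow> nat \<Rightarrow> real" where
  "mat_mul A B m j c = (\<Sum>l = 1..m. A j l * B l c)"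

fun conv_prod :: "(nat \<Rightarrow> nat) \<Rightarrow> (nat \<Rightarrow> nat) \<Rightarrow> (nat \<Rightarrow> nat) \<Rightarrow> (nat \<Rightarrow> nat \<Rightarrow> real) \<Rightarrow> nat \<Rightarrow> nat \<Rightarrow> nat \<Rightarrow> real" where
  "conv_prod d k s w 0 = (\<lambda>j c. if 1 \<le> j \<and> j \<le> d 0 \<and> j = c then 1 else 0)"
| "conv_prod d k s w (Suc i) =
     mat_mul (conv_mat (d i) (d (Suc i)) (k (Suc i)) (s (Suc i)) (w (Suc i)))
             (conv_prod d k s w i) (d i)"

definition final_width :: "nat \<Rightarrow> (nat \<Rightarrow> nat) \<Rightarrow> (nat \<Rightarrow> nat) \<Rightarrow> nat" where
  "final_width N k s = k 1 + (\<Sum>i = 2..N. (k i - 1) * (\<Prod>m = 1..i - 1. s m))"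

text \<open>Final filter v = pi(w): Pi(w) = W_N ... W_1 is convolutional with filter v,
  so v_n is the (1,n) entry of Pi(w), for n = 1..k_v.\<close>
definition final_filter :: "nat \<Rightarrow> (nat \<Rightarrow> nat) \<Rightarrow> (nat \<Rightarrow> nat) \<Rightarrow> (nat \<Rightarrow> nat) \<Rightarrow> (nat \<Rightarrow> nat \<Rightarrow> real) \<Rightarrow> nat \<Rightarrow> real" where
  "final_filter N d k s w n = conv_prod d k s w N 1 n"

definition norm1_final :: "nat \<Rightarrow> (nat \<Rightarrow> nat) \<Rightarrow> (nat \<Rightarrow> nat) \<Rightarrow> (nat \<Rightarrow> nat) \<Rightarrow> (nat \<Rightarrow> nat \<Rightarrow> real) \<Rightarrow> real" where
  "norm1_final N d k s w = (\<Sum>n = 1..final_width N k s. \<bar>final_filter N d k s w n\<bar>)"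

definition sqnorm_layer :: "(nat \<Rightarrow> nat) \<Rightarrow> (nat \<Rightarrow> nat \<Rightarrow> real) \<Rightarrow> nat \<Rightarrow> real" where
  "sqnorm_layer k w i = (\<Sum>n = 1..k i. (w i n)\<^sup>2)"

end

theory Submission
  imports Defs "Berlekamp_Zassenhaus.Factor_Bound" "HOL-Analysis.L2_Norm"
begin

text \<open>Let P_i be the polynomial with coefficient vector w^(i) and S_i = s_1 ... s_(i-1).
  The final filter is the coefficient vector of Q(x) = P_1(x^S_1) ... P_N(x^S_N). The Mahler
  measure M is multiplicative and bounded by the l2-norm of the coefficients (Landau), hence by
  their l1-norm, so M(P_1) ... M(P_N) = M(Q) <= T. Conversely, Mignotte's coefficient bound gives
  ||w^(i)||^2 <= C M(P_i)^2 with C depending only on the architecture, so the product of the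
  squared layer norms is bounded. Since consecutive squared norms differ by the fixed delta_i, a
  very large layer norm forces all layer norms to be at least 1, and it is then bounded by that
  product.\<close>

lemma eq_first_plus_sum_increments:
  fixes a \<delta> :: "nat \<Rightarrow> real"
  assumes "\<forall>i\<in>{1..N - 1}. a (i + 1) - a i = \<delta> i" and "i \<in> {1..N}"
  shows "a i = a 1 + (\<Sum>m\<in>{1..<i}. \<delta> m)"
  using assms(2)
proof (induction i)
  case (Suc i)
  show ?case
  proof (cases "i = 0")
    case False
    then have "i \<in> {1..N - 1}" using Suc.prems by auto
    then have "a (Suc i) = a i + \<delta> i" using assms(1) by fastforce
    then show ?thesis using False Suc by (simp add: sum.atLeastLessThan_Suc)
  qed simp
qed simp

lemma le_of_prod_le_and_fixed_increments:
  fixes a \<delta> :: "nat \<Rightarrow> real"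
  assumes nonneg: "\<forall>i\<in>{1..N}. 0 \<le> a i"
    and prod_le: "(\<Prod>i\<in>{1..N}. a i) \<le> B"
    and incr: "\<forall>i\<in>{1..N - 1}. a (i + 1) - a i = \<delta> i"
    and i: "i \<in> {1..N}"
  shows "a i \<le> 2 * (\<Sum>m\<in>{1..<N}. \<bar>\<delta> m\<bar>) + 1 + \<bar>B\<bar>"
proof (rule ccontr)
  let ?K = "\<Sum>m\<in>{1..<N}. \<bar>\<delta> m\<bar>"
  assume "\<not> ?thesis"
  then have big: "a i > 2 * ?K + 1 + \<bar>B\<bar>" by simp
  have drift: "\<bar>a j - a 1\<bar> \<le> ?K" if j: "j \<in> {1..N}" for j
  proof -
    have "\<bar>a j - a 1\<bar> \<le> (\<Sum>m\<in>{1..<j}. \<bar>\<delta> m\<bar>)"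
      using eq_first_plus_sum_increments[OF incr j] sum_abs by (metis add_diff_cancel_left')
    also have "\<dots> \<le> ?K" using j by (intro sum_mono2) auto
    finally show ?thesis .
  qed
  have "a j \<ge> 1" if "j \<in> {1..N}" for j
    using drift[OF that] drift[OF i] big by linarith
  then have "a i * 1 \<le> a i * (\<Prod>j\<in>{1..N} - {i}. a j)"
    using nonneg i by (intro mult_left_mono prod_ge_1) auto
  also have "\<dots> = (\<Prod>j\<in>{1..N}. a j)" using i by (simp add: prod.remove)
  finally have "a i \<le> B" using prod_le by linarith
  moreover have "0 \<le> ?K" by (rule sum_nonneg) simp
  ultimately show False using big by linarith
qed

lemma mahler_measure_poly_ge_0: "0 \<le> mahler_measure_poly p"
  unfolding mahler_measure_poly_via_monic
  by (intro mult_nonneg_nonneg mahler_measure_monic_ge_0) simp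

lemma cmod_lead_coeff_le_mahler_measure_poly: "cmod (lead_coeff p) \<le> mahler_measure_poly p"
  unfolding mahler_measure_poly_via_monic
  using mult_left_mono[OF mahler_measure_monic_ge_1, of "cmod (lead_coeff p)" p] by simp

lemma mahler_measure_poly_1: "mahler_measure_poly 1 = 1"
  using mahler_measure_constant[of 1] by (simp add: pCons_one)

lemma mahler_measure_poly_prod:
  "mahler_measure_poly (\<Prod>i\<in>A. f i) = (\<Prod>i\<in>A. mahler_measure_poly (f i))"
  by (induction A rule: infinite_finite_induct)
    (simp_all add: measure_eq_prod mahler_measure_poly_1)

lemma cmod_coeff_le_mahler_measure_poly:
  assumes "degree p \<le> G"
  shows "cmod (coeff p t) \<le> 2 ^ Suc G * mahler_measure_poly p"
proof -
  have binom_le: "real (degree p - 1 choose r) \<le> 2 ^ G" for r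
  proof -
    have "degree p - 1 choose r \<le> 2 ^ (degree p - 1)" by (rule binomial_le_pow2)
    also have "\<dots> \<le> 2 ^ G" using assms by (intro power_increasing) auto
    finally show ?thesis using of_nat_mono by fastforce
  qed
  have min_le: "real (min t 1 * (degree p - 1 choose (t - 1))) \<le> real (degree p - 1 choose (t - 1))"
    by (cases t) auto
  have "cmod (coeff p t) \<le> real (degree p - 1 choose t) * mahler_measure_poly p
      + real (min t 1 * (degree p - 1 choose (t - 1))) * cmod (lead_coeff p)"
    by (rule mignotte_helper_coeff)
  also have "\<dots> \<le> 2 ^ G * mahler_measure_poly p + 2 ^ G * mahler_measure_poly p"
    using binom_le min_le mahler_measure_poly_ge_0 cmod_lead_coeff_le_mahler_measure_poly
    by (intro add_mono mult_mono) (auto intro: order_trans)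
  finally show ?thesis by (simp add: mult_ac)
qed

lemma mahler_measure_poly_le_sum_cmod_coeff:
  assumes "degree p < n"
  shows "mahler_measure_poly p \<le> (\<Sum>t<n. cmod (coeff p t))"
proof -
  have "(\<Sum>a\<leftarrow>coeffs p. (cmod a)\<^sup>2) = (\<Sum>t<Suc (degree p). (cmod (coeff p t))\<^sup>2)"
    by (cases "p = 0")
      (simp_all add: coeffs_def interv_sum_list_conv_sum_set_nat lessThan_atLeast0 o_def)
  also have "\<dots> \<le> (\<Sum>t<n. (cmod (coeff p t))\<^sup>2)"
    using assms by (intro sum_mono2) auto
  finally have "mahler_measure_poly p \<le> L2_set (\<lambda>t. cmod (coeff p t)) {..<n}"
    using Landau_inequality[of p] unfolding L2_set_def by (meson order_trans real_sqrt_le_iff)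
  also have "\<dots> \<le> (\<Sum>t<n. cmod (coeff p t))" by (rule L2_set_le_sum) simp
  finally show ?thesis .
qed

lemma is_architecture_layer:
  assumes "is_architecture N d k s" and "Suc i \<le> N"
  shows "d i = (d (Suc i) - 1) * s (Suc i) + k (Suc i)"
    and "0 < s (Suc i)" and "0 < k (Suc i)" and "0 < d (Suc i)"
proof -
  have pos: "0 < k (Suc i)" "0 < s (Suc i)" "0 < d (Suc i)"
    and dim: "real (d (Suc i)) = (real (d i) - real (k (Suc i))) / real (s (Suc i)) + 1"
    using assms unfolding is_architecture_def by auto
  from dim pos have "real (d i) = (real (d (Suc i)) - 1) * real (s (Suc i)) + real (k (Suc i))"
    by (simp add: field_simps)
  with pos have "real (d i) = real ((d (Suc i) - 1) * s (Suc i) + k (Suc i))"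
    by (simp add: of_nat_diff)
  then show "d i = (d (Suc i) - 1) * s (Suc i) + k (Suc i)"
    by (simp only: of_nat_eq_iff)
  show "0 < s (Suc i)" "0 < k (Suc i)" "0 < d (Suc i)" using pos by auto
qed

lemma conv_window_subset:
  assumes "is_architecture N d k s" and "Suc i \<le> N" and "j \<le> d (Suc i)"
  shows "{(j - 1) * s (Suc i) + 1 .. (j - 1) * s (Suc i) + k (Suc i)} \<subseteq> {1..d i}"
proof -
  have "(j - 1) * s (Suc i) \<le> (d (Suc i) - 1) * s (Suc i)"
    using assms(3) by (intro mult_le_mono1) simp
  then show ?thesis using is_architecture_layer(1)[OF assms(1,2)] by auto
qed

lemma conv_prod_Suc_entry:
  assumes arch: "is_architecture N d k s" and i: "Suc i \<le> N" and j: "1 \<le> j" "j \<le> d (Suc i)"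
  shows "conv_prod d k s w (Suc i) j c =
    (\<Sum>n = 1..k (Suc i). w (Suc i) n * conv_prod d k s w i ((j - 1) * s (Suc i) + n) c)"
proof -
  let ?o = "(j - 1) * s (Suc i)"
  let ?W = "conv_mat (d i) (d (Suc i)) (k (Suc i)) (s (Suc i)) (w (Suc i))"
  have window: "{?o + 1 .. ?o + k (Suc i)} \<subseteq> {1..d i}"
    using conv_window_subset[OF arch i j(2)] .
  have "conv_prod d k s w (Suc i) j c = (\<Sum>l = 1..d i. ?W j l * conv_prod d k s w i l c)"
    by (simp add: mat_mul_def)
  also have "\<dots> = (\<Sum>l = ?o + 1 .. ?o + k (Suc i). ?W j l * conv_prod d k s w i l c)"
    by (rule sum.mono_neutral_right[OF finite_atLeastAtMost window]) (auto simp: conv_mat_def)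
  also have "\<dots> = (\<Sum>n = 1..k (Suc i). ?W j (?o + n) * conv_prod d k s w i (?o + n) c)"
    by (rule sum.reindex_bij_witness[of _ "\<lambda>n. ?o + n" "\<lambda>l. l - ?o"]) auto
  also have "\<dots> = (\<Sum>n = 1..k (Suc i). w (Suc i) n * conv_prod d k s w i (?o + n) c)"
    using window j by (intro sum.cong) (auto simp: conv_mat_def)
  finally show ?thesis .
qed

definition stride_prod :: "(nat \<Rightarrow> nat) \<Rightarrow> nat \<Rightarrow> nat" where
  "stride_prod s i = (\<Prod>m\<in>{1..<i}. s m)"

definition layer_poly ::
  "(nat \<Rightarrow> nat) \<Rightarrow> (nat \<Rightarrow> nat) \<Rightarrow> (nat \<Rightarrow> nat \<Rightarrow> real) \<Rightarrow> nat \<Rightarrow> complex poly" where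
  "layer_poly k s w i =
    (\<Sum>n = 1..k i. monom (complex_of_real (w i n)) ((n - 1) * stride_prod s i))"

definition net_poly ::
  "(nat \<Rightarrow> nat) \<Rightarrow> (nat \<Rightarrow> nat) \<Rightarrow> (nat \<Rightarrow> nat \<Rightarrow> real) \<Rightarrow> nat \<Rightarrow> complex poly" where
  "net_poly k s w i = (\<Prod>m = 1..i. layer_poly k s w m)"

definition net_degree :: "nat \<Rightarrow> (nat \<Rightarrow> nat) \<Rightarrow> (nat \<Rightarrow> nat) \<Rightarrow> nat" where
  "net_degree N k s = (\<Sum>m = 1..N. (k m - 1) * stride_prod s m)"

lemma stride_prod_Suc: "0 < i \<Longrightarrow> stride_prod s (Suc i) = stride_prod s i * s i"
  unfolding stride_prod_def by (simp add: prod.atLeastLessThan_Suc)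

lemma stride_prod_pos:
  assumes "is_architecture N d k s" and "i \<le> N"
  shows "0 < stride_prod s i"
  using assms unfolding stride_prod_def is_architecture_def by (intro prod_pos) auto

lemma net_poly_Suc: "net_poly k s w (Suc i) = layer_poly k s w (Suc i) * net_poly k s w i"
  by (simp add: net_poly_def prod.cl_ivl_Suc mult.commute)

lemma coeff_int_net_poly_Suc:
  "coeff_int (net_poly k s w (Suc i)) x =
    (\<Sum>n = 1..k (Suc i). complex_of_real (w (Suc i) n) *
       coeff_int (net_poly k s w i) (x - int ((n - 1) * stride_prod s (Suc i))))"
  unfolding net_poly_Suc layer_poly_def sum_distrib_right coeff_int_sum coeff_int_monom_mult ..

lemma conv_prod_eq_coeff_int_net_poly:
  assumes arch: "is_architecture N d k s"
  shows "i \<le> N \<Longrightarrow> 1 \<le> j \<Longrightarrow> j \<le> d i \<Longrightarrow>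
    complex_of_real (conv_prod d k s w i j c) =
      coeff_int (net_poly k s w i) (int c - 1 - (int j - 1) * int (stride_prod s (Suc i)))"
proof (induction i arbitrary: j c)
  case 0
  then show ?case by (auto simp: net_poly_def stride_prod_def coeff_int_def)
next
  case (Suc i)
  let ?S = "stride_prod s (Suc i)" and ?o = "(j - 1) * s (Suc i)"
  have window: "?o + n \<in> {1..d i}" if "n \<in> {1..k (Suc i)}" for n
    using conv_window_subset[OF arch Suc.prems(1,3)] that by auto
  have shift: "int c - 1 - (int (?o + n) - 1) * int ?S =
      int c - 1 - (int j - 1) * int (stride_prod s (Suc (Suc i))) - int ((n - 1) * ?S)"
    if n: "1 \<le> n" for n
  proof -
    obtain j' n' where "j = Suc j'" "n = Suc n'" using n Suc.prems(2) by (metis One_nat_def Suc_le_D)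
    then show ?thesis by (simp add: stride_prod_Suc algebra_simps)
  qed
  have "complex_of_real (conv_prod d k s w (Suc i) j c) =
      (\<Sum>n = 1..k (Suc i). complex_of_real (w (Suc i) n) *
         complex_of_real (conv_prod d k s w i (?o + n) c))"
    by (simp only: conv_prod_Suc_entry[OF arch Suc.prems] of_real_sum of_real_mult)
  also have "\<dots> = (\<Sum>n = 1..k (Suc i). complex_of_real (w (Suc i) n) *
      coeff_int (net_poly k s w i) (int c - 1 - (int (?o + n) - 1) * int ?S))"
    using Suc.IH Suc.prems(1) window by (intro sum.cong) auto
  also have "\<dots> = coeff_int (net_poly k s w (Suc i))
      (int c - 1 - (int j - 1) * int (stride_prod s (Suc (Suc i))))"
    unfolding coeff_int_net_poly_Suc by (intro sum.cong refl) (metis atLeastAtMost_iff shift)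
  finally show ?case .
qed

lemma final_filter_eq_coeff_net_poly:
  assumes "is_architecture N d k s" and "1 \<le> N" and "1 \<le> n"
  shows "complex_of_real (final_filter N d k s w n) = coeff (net_poly k s w N) (n - 1)"
proof -
  have "1 \<le> d N" using assms(1,2) unfolding is_architecture_def by auto
  then show ?thesis
    using conv_prod_eq_coeff_int_net_poly[OF assms(1), of N 1 w n] assms(3)
    by (simp add: final_filter_def coeff_int_def nat_diff_distrib)
qed

lemma final_width_eq_net_degree:
  assumes "is_architecture N d k s" and "1 \<le> N"
  shows "final_width N k s = net_degree N k s + 1"
proof -
  have "0 < k 1" using assms unfolding is_architecture_def by auto
  moreover have "stride_prod s m = (\<Prod>j = 1..m - 1. s j)" if "m \<in> {2..N}" for m
    using that unfolding stride_prod_def by (cases m) (auto simp: atLeastLessThanSuc_atLeastAtMost)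
  ultimately show ?thesis
    using assms(2) unfolding final_width_def net_degree_def
    by (simp add: sum.atLeast_Suc_atMost numeral_2_eq_2 stride_prod_def)
qed

lemma degree_layer_poly: "degree (layer_poly k s w i) \<le> (k i - 1) * stride_prod s i"
  unfolding layer_poly_def
proof (rule degree_sum_le)
  fix n assume "n \<in> {1..k i}"
  then have "(n - 1) * stride_prod s i \<le> (k i - 1) * stride_prod s i" by (intro mult_le_mono1) auto
  then show "degree (monom (complex_of_real (w i n)) ((n - 1) * stride_prod s i))
      \<le> (k i - 1) * stride_prod s i"
    using degree_monom_le order_trans by blast
qed simp

lemma degree_layer_poly_le_net_degree:
  assumes "i \<in> {1..N}"
  shows "degree (layer_poly k s w i) \<le> net_degree N k s"
proof -
  have "(k i - 1) * stride_prod s i \<le> net_degree N k s"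
    unfolding net_degree_def using assms by (intro member_le_sum) auto
  then show ?thesis using degree_layer_poly order_trans by blast
qed

lemma degree_net_poly: "degree (net_poly k s w N) \<le> net_degree N k s"
  unfolding net_poly_def net_degree_def
proof (rule order_trans[OF degree_prod_sum_le])
  show "sum (degree \<circ> layer_poly k s w) {1..N} \<le> (\<Sum>m = 1..N. (k m - 1) * stride_prod s m)"
    by (rule sum_mono) (unfold o_apply, rule degree_layer_poly)
qed simp

lemma coeff_layer_poly:
  assumes "0 < stride_prod s i" and "n \<in> {1..k i}"
  shows "coeff (layer_poly k s w i) ((n - 1) * stride_prod s i) = complex_of_real (w i n)"
proof -
  have "coeff (layer_poly k s w i) ((n - 1) * stride_prod s i) = (\<Sum>n' = 1..k i.
      if (n' - 1) * stride_prod s i = (n - 1) * stride_prod s i then complex_of_real (w i n') else 0)"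
    unfolding layer_poly_def coeff_sum coeff_monom ..
  also have "\<dots> = (\<Sum>n' = 1..k i. if n' = n then complex_of_real (w i n') else 0)"
    using assms by (intro sum.cong) auto
  finally show ?thesis using assms(2) by simp
qed

lemma mahler_measure_net_poly_le_norm1_final:
  assumes "is_architecture N d k s" and "1 \<le> N"
  shows "mahler_measure_poly (net_poly k s w N) \<le> norm1_final N d k s w"
proof -
  let ?Q = "net_poly k s w N"
  have "norm1_final N d k s w = (\<Sum>n = 1..net_degree N k s + 1. cmod (coeff ?Q (n - 1)))"
    unfolding norm1_final_def final_width_eq_net_degree[OF assms]
    by (intro sum.cong refl)
      (metis final_filter_eq_coeff_net_poly[OF assms] atLeastAtMost_iff norm_of_real)
  also have "\<dots> = (\<Sum>t < net_degree N k s + 1. cmod (coeff ?Q t))"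
    by (rule sum.reindex_bij_witness[of _ Suc "\<lambda>n. n - 1"]) auto
  moreover have "mahler_measure_poly ?Q \<le> (\<Sum>t < net_degree N k s + 1. cmod (coeff ?Q t))"
    using degree_net_poly[of k s w N] by (intro mahler_measure_poly_le_sum_cmod_coeff) simp
  ultimately show ?thesis by simp
qed

lemma sqnorm_layer_nonneg: "0 \<le> sqnorm_layer k w i"
  unfolding sqnorm_layer_def by (rule sum_nonneg) simp

lemma sqnorm_layer_le_mahler_measure_poly:
  assumes "0 < stride_prod s i" and "degree (layer_poly k s w i) \<le> G"
  shows "sqnorm_layer k w i \<le> real (k i) * 4 ^ Suc G * (mahler_measure_poly (layer_poly k s w i))\<^sup>2"
proof -
  let ?M = "mahler_measure_poly (layer_poly k s w i)"
  have "(w i n)\<^sup>2 \<le> 4 ^ Suc G * ?M\<^sup>2" if "n \<in> {1..k i}" for n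
  proof -
    have "\<bar>w i n\<bar> \<le> 2 ^ Suc G * ?M"
      using cmod_coeff_le_mahler_measure_poly[OF assms(2)] coeff_layer_poly[where k = k and w = w, OF assms(1) that]
      by (metis norm_of_real)
    then have "\<bar>w i n\<bar>\<^sup>2 \<le> (2 ^ Suc G * ?M)\<^sup>2" by (intro power_mono) auto
    also have "\<dots> = 4 ^ Suc G * ?M\<^sup>2"
      by (simp add: power2_eq_square mult_ac flip: power_mult_distrib)
    finally show ?thesis by simp
  qed
  then have "sqnorm_layer k w i \<le> (\<Sum>n = 1..k i. 4 ^ Suc G * ?M\<^sup>2)"
    unfolding sqnorm_layer_def by (rule sum_mono)
  then show ?thesis by simp
qed

lemma prod_sqnorm_layer_le:
  assumes arch: "is_architecture N d k s" and "1 \<le> N" and "norm1_final N d k s w \<le> T"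
  shows "(\<Prod>i = 1..N. sqnorm_layer k w i)
    \<le> (\<Prod>i = 1..N. real (k i) * 4 ^ Suc (net_degree N k s)) * T\<^sup>2"
proof -
  let ?C = "\<lambda>i. real (k i) * 4 ^ Suc (net_degree N k s)"
  let ?M = "\<lambda>i. mahler_measure_poly (layer_poly k s w i)"
  have "(\<Prod>i = 1..N. sqnorm_layer k w i) \<le> (\<Prod>i = 1..N. ?C i * (?M i)\<^sup>2)"
    using sqnorm_layer_le_mahler_measure_poly stride_prod_pos[OF arch]
      degree_layer_poly_le_net_degree
    by (intro prod_mono) (auto simp: sqnorm_layer_nonneg)
  also have "\<dots> = (\<Prod>i = 1..N. ?C i) * (mahler_measure_poly (net_poly k s w N))\<^sup>2"
    by (simp add: prod.distrib net_poly_def mahler_measure_poly_prod prod_power_distrib)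
  also have "\<dots> \<le> (\<Prod>i = 1..N. ?C i) * T\<^sup>2"
    using mahler_measure_net_poly_le_norm1_final[OF arch assms(2), of w] assms(3)
      mahler_measure_poly_ge_0
    by (intro mult_left_mono power_mono prod_nonneg) auto
  finally show ?thesis .
qed

theorem lemma3p5:
  fixes N :: nat and d k s :: "nat \<Rightarrow> nat"
  assumes arch: "is_architecture N d k s"
  shows "\<forall>T > 0. \<forall>\<delta> :: nat \<Rightarrow> real. \<exists>\<tau> :: real.
           \<forall>w :: nat \<Rightarrow> nat \<Rightarrow> real.
             norm1_final N d k s w \<le> T \<and>
             (\<forall>i\<in>{1..N - 1}. sqnorm_layer k w (i + 1) - sqnorm_layer k w i = \<delta> i)
             \<longrightarrow> (\<forall>i\<in>{1..N}. sqnorm_layer k w i \<le> \<tau>)"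
proof (intro allI impI)
  fix T :: real and \<delta> :: "nat \<Rightarrow> real"
  let ?B = "(\<Prod>i = 1..N. real (k i) * 4 ^ Suc (net_degree N k s)) * T\<^sup>2"
  show "\<exists>\<tau>. \<forall>w. norm1_final N d k s w \<le> T \<and>
      (\<forall>i\<in>{1..N - 1}. sqnorm_layer k w (i + 1) - sqnorm_layer k w i = \<delta> i)
      \<longrightarrow> (\<forall>i\<in>{1..N}. sqnorm_layer k w i \<le> \<tau>)"
  proof (intro exI allI impI ballI)
    fix w i
    assume "norm1_final N d k s w \<le> T \<and>
      (\<forall>i\<in>{1..N - 1}. sqnorm_layer k w (i + 1) - sqnorm_layer k w i = \<delta> i)"
      and i: "i \<in> {1..N}"
    then show "sqnorm_layer k w i \<le> 2 * (\<Sum>m\<in>{1..<N}. \<bar>\<delta> m\<bar>) + 1 + \<bar>?B\<bar>"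
      using prod_sqnorm_layer_le[OF arch, of w T]
      by (intro le_of_prod_le_and_fixed_increments[of N _ ?B]) (auto simp: sqnorm_layer_nonneg)
  qed
qed

end
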